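(* Let $a<b$ be elements of $\mathcal{C}_n$ and let $N^{[a]}\left(\mathcal{STR}^{(n)}\{a,b\}\right)=\{a_\ell b_{n-\ell}:\ b+1\le\ell\le n\}$. Then $N^{[a]}\left(\mathcal{STR}^{(n)}\{a,b\}\right)$ is a subsemiring of $\mathcal{STR}^{(n)}\{a,b\}$, and it consists exactly of all $a$-nilpotent elements of $\mathcal{STR}^{(n)}\{a,b\}$, i.e. of all $\alpha\in\mathcal{STR}^{(n)}\{a,b\}$ with $\alpha^m=\overline{a}$ for some natural number $m$.
   Context: $\mathcal{C}_n=\{0,1,\dots,n-1\}$ with its usual order; $\widehat{\mathcal{E}}_{\mathcal{C}_n}$ is the set of all order-preserving maps $\mathcal{C}_n\to\mathcal{C}_n$ (not required to fix $0$), a semiring with $(\alpha+\beta)(x)=\max(\alpha(x),\beta(x))$ and $(\alpha\cdot\beta)(x)=\beta(\alpha(x))$. The string $\mathcal{STR}^{(n)}\{a,b\}$ is the set of $\alpha\in\widehat{\mathcal{E}}_{\mathcal{C}_n}$ with image in $\{a,b\}$; its elements are written $a_kb_{n-k}$ ($0\le k\le n$), the map sending $0,\dots,k-1$ to $a$ and $k,\dots,n-1$ to $b$; $\overline{a}=a_nb_0$ and $\overline{b}=a_0b_n$ are the constant maps. *)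

theory Defs
  imports Main
begin

text \<open>Order-preserving self-maps of the chain C_n = {0,...,n-1}, represented
  extensionally as functions nat => nat that are 0 outside {0..<n}.\<close>

definition endo :: "nat \<Rightarrow> (nat \<Rightarrow> nat) set" where
  "endo n = {f. (\<forall>x<n. f x < n) \<and> (\<forall>x y. x \<le> y \<and> y < n \<longrightarrow> f x \<le> f y)
               \<and> (\<forall>x. n \<le> x \<longrightarrow> f x = 0)}"

definition eplus :: "nat \<Rightarrow> (nat \<Rightarrow> nat) \<Rightarrow> (nat \<Rightarrow> nat) \<Rightarrow> (nat \<Rightarrow> nat)" where
  "eplus n f g = (\<lambda>x. if x < n then max (f x) (g x) else 0)"

definition emult :: "nat \<Rightarrow> (nat \<Rightarrow> nat) \<Rightarrow> (nat \<Rightarrow> nat) \<Rightarrow> (nat \<Rightarrow> nat)" where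
  "emult n f g = (\<lambda>x. if x < n then g (f x) else 0)"

definition eone :: "nat \<Rightarrow> (nat \<Rightarrow> nat)" where
  "eone n = (\<lambda>x. if x < n then x else 0)"

fun epow :: "nat \<Rightarrow> (nat \<Rightarrow> nat) \<Rightarrow> nat \<Rightarrow> (nat \<Rightarrow> nat)" where
  "epow n f 0 = eone n"
| "epow n f (Suc m) = emult n (epow n f m) f"

definition STRab :: "nat \<Rightarrow> nat \<Rightarrow> nat \<Rightarrow> (nat \<Rightarrow> nat) set" where
  "STRab n a b = {f \<in> endo n. \<forall>x<n. f x = a \<or> f x = b}"

text \<open>a_k b_{n-k}: sends 0..k-1 to a and k..n-1 to b.\<close>
definition ab :: "nat \<Rightarrow> nat \<Rightarrow> nat \<Rightarrow> nat \<Rightarrow> (nat \<Rightarrow> nat)" where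
  "ab n a b k = (\<lambda>x. if x < k then a else if x < n then b else 0)"

definition Nil_a :: "nat \<Rightarrow> nat \<Rightarrow> nat \<Rightarrow> (nat \<Rightarrow> nat) set" where
  "Nil_a n a b = {ab n a b l | l. b + 1 \<le> l \<and> l \<le> n}"

definition subsemiring :: "nat \<Rightarrow> (nat \<Rightarrow> nat) set \<Rightarrow> (nat \<Rightarrow> nat) set \<Rightarrow> bool" where
  "subsemiring n T S \<longleftrightarrow> T \<subseteq> S \<and> T \<noteq> {} \<and>
     (\<forall>f\<in>T. \<forall>g\<in>T. eplus n f g \<in> T \<and> emult n f g \<in> T)"

end

theory Submission
  imports Defs
begin

text \<open>Every element of STR^(n){a,b} is a step map a_k b_{n-k}, and sums of step maps take
  the smaller step. If k > b, both values a and b are sent to a, so any product with such a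
  map, in particular its square, is the constant a. If k \<le> b, then b is a fixed point, so
  no power is the constant a.\<close>

lemma ab_in_STRab:
  assumes "a \<le> b" "b < n" "k \<le> n"
  shows "ab n a b k \<in> STRab n a b"
  using assms unfolding STRab_def endo_def ab_def by auto

lemma eplus_ab:
  assumes "a \<le> b" "l \<le> n" "l' \<le> n"
  shows "eplus n (ab n a b l) (ab n a b l') = ab n a b (min l l')"
  using assms unfolding eplus_def ab_def by (intro ext) auto

lemma emult_ab:
  assumes "a < l'" "b < l'" "l \<le> n"
  shows "emult n (ab n a b l) (ab n a b l') = ab n a b n"
  using assms unfolding emult_def ab_def by (intro ext) auto

lemma emult_eone_left:
  assumes "f \<in> endo n"
  shows "emult n (eone n) f = f"
  using assms unfolding emult_def eone_def endo_def by (intro ext) auto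

lemma epow_two: "f \<in> endo n \<Longrightarrow> epow n f 2 = emult n f f"
  by (simp add: numeral_2_eq_2 emult_eone_left)

lemma epow_fixed_point:
  assumes "f c = c" "c < n"
  shows "epow n f m c = c"
  using assms by (induction m) (auto simp: emult_def eone_def)

lemma STRab_obtain_ab:
  assumes f: "f \<in> STRab n a b" and "a < b"
  obtains k where "k \<le> n" "f = ab n a b k"
proof
  define k where "k = (LEAST x. n \<le> x \<or> f x = b)"
  have mono: "\<And>x y. x \<le> y \<Longrightarrow> y < n \<Longrightarrow> f x \<le> f y"
    and vals: "\<And>x. x < n \<Longrightarrow> f x = a \<or> f x = b"
    and zero: "\<And>x. n \<le> x \<Longrightarrow> f x = 0"
    using f unfolding STRab_def endo_def by auto
  show "k \<le> n"
    unfolding k_def by (rule Least_le) simp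
  have k: "n \<le> k \<or> f k = b"
    unfolding k_def by (rule LeastI[of _ n]) simp
  have below: "x < k \<Longrightarrow> x < n \<and> f x \<noteq> b" for x
    unfolding k_def using not_less_Least by fastforce
  show "f = ab n a b k"
  proof
    fix x
    consider "x < k" | "k \<le> x" "x < n" | "n \<le> x" by linarith
    then show "f x = ab n a b k x"
    proof cases
      case 1
      then show ?thesis using below vals by (auto simp: ab_def)
    next
      case 2
      then have "b \<le> f x" using k mono[of k x] by auto
      then show ?thesis using 2 vals[of x] \<open>a < b\<close> \<open>k \<le> n\<close> by (auto simp: ab_def)
    next
      case 3
      then show ?thesis using zero \<open>k \<le> n\<close> by (auto simp: ab_def)
    qed
  qed
qed

lemma Nil_a_subsemiring:
  assumes "a < b" "b < n"
  shows "subsemiring n (Nil_a n a b) (STRab n a b)"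
  unfolding subsemiring_def
proof (intro conjI ballI)
  show "Nil_a n a b \<subseteq> STRab n a b"
    using ab_in_STRab assms unfolding Nil_a_def by fastforce
  show "Nil_a n a b \<noteq> {}"
    using assms unfolding Nil_a_def by auto
  fix f g assume "f \<in> Nil_a n a b" "g \<in> Nil_a n a b"
  then obtain l l' where l: "f = ab n a b l" "b < l" "l \<le> n"
    and l': "g = ab n a b l'" "b < l'" "l' \<le> n"
    unfolding Nil_a_def by auto
  show "eplus n f g \<in> Nil_a n a b"
    using l l' eplus_ab[of a b l n l'] assms unfolding Nil_a_def
    by (auto intro!: exI[of _ "min l l'"])
  show "emult n f g \<in> Nil_a n a b"
    using l l' emult_ab[of a l' b l n] assms unfolding Nil_a_def by auto
qed

lemma ab_nilpotent:
  assumes "a < b" "b < l" "l \<le> n"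
  shows "epow n (ab n a b l) 2 = ab n a b n"
  using assms ab_in_STRab[of a b n l] emult_ab[of a l b l n]
  by (simp add: epow_two STRab_def)

lemma ab_nilpotent_imp_step_above:
  assumes "a < b" "b < n" "epow n (ab n a b k) m = ab n a b n"
  shows "b < k"
proof (rule ccontr)
  assume "\<not> b < k"
  then have "ab n a b k b = b" using \<open>b < n\<close> by (simp add: ab_def)
  then have "epow n (ab n a b k) m b = b" using \<open>b < n\<close> by (rule epow_fixed_point)
  with assms show False by (simp add: ab_def)
qed

theorem proposition9:
  fixes n a b :: nat
  assumes "a < b" and "b < n"
  shows "subsemiring n (Nil_a n a b) (STRab n a b)
       \<and> Nil_a n a b = {\<alpha> \<in> STRab n a b. \<exists>m. epow n \<alpha> m = ab n a b n}"
proof (intro conjI equalityI subsetI)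
  show "subsemiring n (Nil_a n a b) (STRab n a b)"
    using assms by (rule Nil_a_subsemiring)
next
  fix \<alpha> assume "\<alpha> \<in> Nil_a n a b"
  then obtain l where "\<alpha> = ab n a b l" "b < l" "l \<le> n"
    unfolding Nil_a_def by auto
  then show "\<alpha> \<in> {\<alpha> \<in> STRab n a b. \<exists>m. epow n \<alpha> m = ab n a b n}"
    using assms ab_in_STRab ab_nilpotent by (auto intro!: exI[of _ 2])
next
  fix \<alpha> assume "\<alpha> \<in> {\<alpha> \<in> STRab n a b. \<exists>m. epow n \<alpha> m = ab n a b n}"
  then obtain m where "\<alpha> \<in> STRab n a b" "epow n \<alpha> m = ab n a b n" by auto
  moreover from this(1) obtain k where "k \<le> n" "\<alpha> = ab n a b k"
    using \<open>a < b\<close> by (rule STRab_obtain_ab)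
  ultimately show "\<alpha> \<in> Nil_a n a b"
    using ab_nilpotent_imp_step_above[OF assms] unfolding Nil_a_def by fastforce
qed

end
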